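(* Let $p$ be a prime and $G$ a totally disconnected locally compact group. The following are equivalent: 1. $G$ is locally elliptic. 2. $G$ satisfies Reiter's property for $\varepsilon = 0$. 3. $G$ satisfies Reiter's property for some $\varepsilon \in [0,1]$. 4. $G$ satisfies Reiter's property for $\varepsilon = 1$.
   Context: $C_{00}(G,\mathbb{Q}_p)$ denotes compactly supported continuous functions $G\to\mathbb{Q}_p$, with sup norm $\|\cdot\|_\infty$ (using the $p$-adic norm) and action $(g\cdot f)(x)=f(g^{-1}x)$. For $\varepsilon\in(0,1]$, $G$ satisfies Reiter's property for $\varepsilon$ if for every compact subset $K\subset G$ there exists $f\in C_{00}(G,\mathbb{Q}_p)$ with $\|f\|_\infty=1$ and $\|g\cdot f-f\|_\infty<\varepsilon$ for all $g\in K$; for $\varepsilon=0$ it means that for every compact $K$ there exists such $f$ with $\|f\|_\infty=1$ and $g\cdot f=f$ for all $g\in K$. $G$ is locally elliptic if every finite subset of $G$ is contained in a compact subgroup. *)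

theory Defs
  imports "HOL-Analysis.Analysis" "HOL-Computational_Algebra.Primes"
begin

definition padic_val :: "nat \<Rightarrow> rat \<Rightarrow> int" where
  "padic_val p q = (case quotient_of q of (a, b) \<Rightarrow>
      int (multiplicity (int p) a) - int (multiplicity (int p) b))"

definition padic_abs :: "nat \<Rightarrow> rat \<Rightarrow> real" where
  "padic_abs p q = (if q = 0 then 0 else real p powi (- padic_val p q))"

text \<open>Elements of Q_p: Cauchy sequences of rationals for the p-adic absolute
  value (two sequences represent the same element iff their difference has
  p-adic norm 0).\<close>
definition qp_cauchy :: "nat \<Rightarrow> (nat \<Rightarrow> rat) \<Rightarrow> bool" where
  "qp_cauchy p X \<longleftrightarrow>
     (\<forall>e>0. \<exists>N. \<forall>m\<ge>N. \<forall>n\<ge>N. padic_abs p (X m - X n) < e)"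

text \<open>The p-adic norm on Q_p (the limit exists for Cauchy sequences).\<close>
definition qp_norm :: "nat \<Rightarrow> (nat \<Rightarrow> rat) \<Rightarrow> real" where
  "qp_norm p X = lim (\<lambda>n. padic_abs p (X n))"

definition C00 :: "nat \<Rightarrow> ('g::topological_space \<Rightarrow> nat \<Rightarrow> rat) set" where
  "C00 p = {f. (\<forall>x. qp_cauchy p (f x))
     \<and> (\<forall>x. \<forall>e>0. \<exists>U. open U \<and> x \<in> U \<and>
              (\<forall>y\<in>U. qp_norm p (\<lambda>n. f y n - f x n) < e))
     \<and> (\<exists>K. compact K \<and> (\<forall>x. x \<notin> K \<longrightarrow> qp_norm p (f x) = 0))}"

definition sup_norm :: "nat \<Rightarrow> ('g \<Rightarrow> nat \<Rightarrow> rat) \<Rightarrow> real" where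
  "sup_norm p f = (SUP x. qp_norm p (f x))"

text \<open>Left translation action (g\<cdot>f)(x) = f(g^{-1} x); the group is written additively
  (group_add is not assumed commutative).\<close>
definition translate :: "'g::group_add \<Rightarrow> ('g \<Rightarrow> 'b) \<Rightarrow> ('g \<Rightarrow> 'b)" where
  "translate g f = (\<lambda>x. f (- g + x))"

definition fun_diff :: "('g \<Rightarrow> nat \<Rightarrow> rat) \<Rightarrow> ('g \<Rightarrow> nat \<Rightarrow> rat) \<Rightarrow> ('g \<Rightarrow> nat \<Rightarrow> rat)" where
  "fun_diff f h = (\<lambda>x n. f x n - h x n)"

definition reiter :: "nat \<Rightarrow> real \<Rightarrow> 'g::topological_group_add itself \<Rightarrow> bool" where
  "reiter p \<epsilon> _ \<longleftrightarrow>
     (if \<epsilon> = 0 then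
        (\<forall>K::'g set. compact K \<longrightarrow> (\<exists>f\<in>C00 p. sup_norm p f = 1 \<and>
            (\<forall>g\<in>K. sup_norm p (fun_diff (translate g f) f) = 0)))
      else
        (\<forall>K::'g set. compact K \<longrightarrow> (\<exists>f\<in>C00 p. sup_norm p f = 1 \<and>
            (\<forall>g\<in>K. sup_norm p (fun_diff (translate g f) f) < \<epsilon>))))"

definition subgroup_add :: "'g::group_add set \<Rightarrow> bool" where
  "subgroup_add H \<longleftrightarrow> 0 \<in> H \<and> (\<forall>x\<in>H. \<forall>y\<in>H. x + y \<in> H) \<and> (\<forall>x\<in>H. - x \<in> H)"

definition locally_elliptic :: "'g::topological_group_add itself \<Rightarrow> bool" where
  "locally_elliptic _ \<longleftrightarrow>
     (\<forall>F::'g set. finite F \<longrightarrow> (\<exists>H. subgroup_add H \<and> compact H \<and> F \<subseteq> H))"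

definition totally_disconnected :: "'a::topological_space itself \<Rightarrow> bool" where
  "totally_disconnected _ \<longleftrightarrow> (\<forall>x::'a. connected_component_set UNIV x = {x})"

end

theory Submission
  imports Defs
begin

text \<open>If \<open>f \<in> C\<^sub>0\<^sub>0(G, \<rat>\<^sub>p)\<close> has sup norm 1, the ultrametric inequality and the discreteness
  of the value group \<open>p\<^sup>\<int>\<close> make the level set \<open>A = {x. |f x| = 1}\<close> nonempty, compact and
  closed, and a translate \<open>g\<cdot>f\<close> with \<open>\<parallel>g\<cdot>f - f\<parallel> < 1\<close> has the same level set. Hence every
  element of a finite set \<open>F\<close> witnessing Reiter's property for \<open>\<epsilon> = 1\<close> lies in the
  stabilizer of \<open>A\<close>, a compact subgroup. Conversely, by van Dantzig's theorem a
  totally disconnected locally compact group has a compact open subgroup \<open>W\<close>; if the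
  group is locally elliptic, a compact set \<open>K\<close> lies in the stabilizer of \<open>W + H\<close> for a
  suitable compact subgroup \<open>H\<close>; this stabilizer is a compact open subgroup, and its
  indicator function is invariant under \<open>K\<close>.\<close>

section \<open>The p-adic absolute value on the rationals\<close>

lemma padic_val_of_int_divide:
  fixes a b :: int
  assumes p: "prime p" and a: "a \<noteq> 0" and b: "b \<noteq> 0"
  shows "padic_val p (of_int a / of_int b) =
     int (multiplicity (int p) a) - int (multiplicity (int p) b)"
proof -
  obtain x y where q: "quotient_of (of_int a / of_int b) = (x, y)"
    by (cases "quotient_of (of_int a / of_int b)")
  have y: "y > 0" using quotient_of_denom_pos[OF q] .
  have eq: "(of_int a / of_int b :: rat) = of_int x / of_int y" using quotient_of_div[OF q] .
  have x: "x \<noteq> 0" using eq a b y by auto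
  have "of_int (a * y) = (of_int (x * b) :: rat)" using eq b y by (simp add: field_simps)
  hence "a * y = x * b" by (metis of_int_eq_iff)
  moreover have "prime_elem (int p)" using p by simp
  ultimately have "multiplicity (int p) a + multiplicity (int p) y =
      multiplicity (int p) x + multiplicity (int p) b"
    using prime_elem_multiplicity_mult_distrib a b x y by (metis less_irrefl)
  thus ?thesis unfolding padic_val_def q by simp
qed

lemma multiplicity_add_ge_min:
  fixes a b :: int
  assumes "prime p" "a + b \<noteq> 0"
  shows "min (multiplicity (int p) a) (multiplicity (int p) b) \<le> multiplicity (int p) (a + b)"
proof -
  let ?m = "min (multiplicity (int p) a) (multiplicity (int p) b)"
  have "int p ^ ?m dvd a" "int p ^ ?m dvd b" by (rule multiplicity_dvd'; simp)+
  hence "int p ^ ?m dvd a + b" by simp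
  thus ?thesis using assms by (intro multiplicity_geI) (auto simp: prime_gt_1_nat)
qed

lemma padic_val_add_ge_min:
  assumes p: "prime p" and a: "a \<noteq> 0" and b: "b \<noteq> 0" and ab: "a + b \<noteq> 0"
  shows "min (padic_val p a) (padic_val p b) \<le> padic_val p (a + b)"
proof -
  obtain x y where q1: "quotient_of a = (x, y)" by (cases "quotient_of a")
  obtain z w where q2: "quotient_of b = (z, w)" by (cases "quotient_of b")
  have y: "y > 0" and w: "w > 0" using quotient_of_denom_pos q1 q2 by blast+
  have ea: "a = of_int x / of_int y" and eb: "b = of_int z / of_int w"
    using quotient_of_div q1 q2 by blast+
  have x: "x \<noteq> 0" and z: "z \<noteq> 0" using ea eb a b by auto
  have es: "a + b = of_int (x * w + z * y) / of_int (y * w)" using ea eb y w by (simp add: field_simps)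
  have s: "x * w + z * y \<noteq> 0" using es ab by (metis div_0 of_int_0)
  have pe: "prime_elem (int p)" using p by simp
  let ?v = "multiplicity (int p)"
  have va: "padic_val p a = int (?v x) - int (?v y)"
    using padic_val_of_int_divide[OF p x, of y] y ea by simp
  have vb: "padic_val p b = int (?v z) - int (?v w)"
    using padic_val_of_int_divide[OF p z, of w] w eb by simp
  have vs: "padic_val p (a + b) = int (?v (x * w + z * y)) - int (?v y) - int (?v w)"
    using padic_val_of_int_divide[OF p s, of "y * w"] y w es
      prime_elem_multiplicity_mult_distrib[OF pe, of y w] by simp
  have "?v (x * w) = ?v x + ?v w" "?v (z * y) = ?v z + ?v y"
    using prime_elem_multiplicity_mult_distrib[OF pe] x z y w by simp_all
  moreover have "min (?v (x * w)) (?v (z * y)) \<le> ?v (x * w + z * y)"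
    by (rule multiplicity_add_ge_min[OF p s])
  ultimately show ?thesis using va vb vs by linarith
qed

lemma padic_val_uminus [simp]: "padic_val p (- q) = padic_val p q"
proof -
  obtain x y where q: "quotient_of q = (x, y)" by (cases "quotient_of q")
  have "quotient_of (- q) = (- x, y)" using q by (simp add: rat_uminus_code)
  moreover have "multiplicity (int p) (- x) = multiplicity (int p) x"
    by (metis multiplicity_normalize_right normalize_int_def abs_minus_cancel)
  ultimately show ?thesis using q by (simp add: padic_val_def)
qed

lemma padic_abs_nonneg: "0 \<le> padic_abs p q"
  by (simp add: padic_abs_def)

lemma padic_abs_0 [simp]: "padic_abs p 0 = 0"
  by (simp add: padic_abs_def)

lemma padic_abs_1 [simp]: "padic_abs p 1 = 1"
  by (simp add: padic_abs_def padic_val_def quotient_of_number)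

lemma padic_abs_uminus [simp]: "padic_abs p (- q) = padic_abs p q"
  by (simp add: padic_abs_def)

lemma padic_abs_minus_commute: "padic_abs p (a - b) = padic_abs p (b - a)"
  by (metis minus_diff_eq padic_abs_uminus)

lemma padic_abs_cases: "padic_abs p q = 0 \<or> (\<exists>k. padic_abs p q = real p powi k)"
  by (auto simp: padic_abs_def)

lemma padic_abs_add_le_max:
  assumes p: "prime p"
  shows "padic_abs p (a + b) \<le> max (padic_abs p a) (padic_abs p b)"
proof (cases "a = 0 \<or> b = 0 \<or> a + b = 0")
  case True
  then show ?thesis by (auto simp: padic_abs_nonneg le_max_iff_disj)
next
  case False
  hence ne: "a \<noteq> 0" "b \<noteq> 0" "a + b \<noteq> 0" by auto
  have p1: "real p \<ge> 1" using prime_gt_1_nat[OF p] by simp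
  have val: "min (padic_val p a) (padic_val p b) \<le> padic_val p (a + b)"
    by (rule padic_val_add_ge_min[OF p ne])
  show ?thesis
  proof (cases "padic_val p a \<le> padic_val p b")
    case True
    with val have "real p powi (- padic_val p (a + b)) \<le> real p powi (- padic_val p a)"
      by (intro power_int_increasing p1) linarith
    thus ?thesis using ne by (simp add: padic_abs_def)
  next
    case False
    with val have "real p powi (- padic_val p (a + b)) \<le> real p powi (- padic_val p b)"
      by (intro power_int_increasing p1) linarith
    thus ?thesis using ne by (simp add: padic_abs_def)
  qed
qed

lemma padic_abs_eq_if_diff_less:
  assumes p: "prime p" and less: "padic_abs p (a - b) < padic_abs p b"
  shows "padic_abs p a = padic_abs p b"
proof -
  have "padic_abs p a \<le> max (padic_abs p (a - b)) (padic_abs p b)"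
    using padic_abs_add_le_max[OF p, of "a - b" b] by simp
  moreover have "padic_abs p b \<le> max (padic_abs p (b - a)) (padic_abs p a)"
    using padic_abs_add_le_max[OF p, of "b - a" a] by simp
  ultimately show ?thesis using less by (auto simp: padic_abs_minus_commute)
qed

section \<open>The p-adic norm on Cauchy sequences\<close>

lemma qp_norm_const [simp]: "qp_norm p (\<lambda>n. c) = padic_abs p c"
  unfolding qp_norm_def by (rule limI) simp

lemma qp_cauchy_const [simp]: "qp_cauchy p (\<lambda>n. c)"
  unfolding qp_cauchy_def by simp

text \<open>By the isosceles property, a Cauchy sequence not tending to 0 has eventually constant
  absolute value.\<close>

lemma qp_cauchy_padic_abs_convergent:
  assumes p: "prime p" and X: "qp_cauchy p X"
  obtains c where "(\<lambda>n. padic_abs p (X n)) \<longlonglongrightarrow> c" "c = 0 \<or> (\<exists>k. c = real p powi k)"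
proof (cases "\<forall>e>0. \<exists>N. \<forall>n\<ge>N. padic_abs p (X n) < e")
  case True
  have "(\<lambda>n. padic_abs p (X n)) \<longlonglongrightarrow> 0"
  proof (rule LIMSEQ_I)
    fix r :: real assume "0 < r"
    then obtain N where "\<forall>n\<ge>N. padic_abs p (X n) < r" using True by blast
    thus "\<exists>N. \<forall>n\<ge>N. norm (padic_abs p (X n) - 0) < r" using padic_abs_nonneg by auto
  qed
  thus thesis using that by blast
next
  case False
  then obtain e where e: "e > 0" and frequent: "\<And>N. \<exists>n\<ge>N. e \<le> padic_abs p (X n)"
    by (meson not_le)
  obtain N where N: "\<And>m n. m \<ge> N \<Longrightarrow> n \<ge> N \<Longrightarrow> padic_abs p (X m - X n) < e"
    using X e unfolding qp_cauchy_def by blast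
  obtain n where n: "n \<ge> N" "e \<le> padic_abs p (X n)" using frequent by blast
  have "padic_abs p (X m) = padic_abs p (X n)" if "m \<ge> N" for m
    using N[OF that n(1)] n(2) by (intro padic_abs_eq_if_diff_less[OF p]) simp
  hence "(\<lambda>m. padic_abs p (X m)) \<longlonglongrightarrow> padic_abs p (X n)"
    by (intro tendsto_eventually) (auto simp: eventually_sequentially)
  thus thesis using that padic_abs_cases by blast
qed

lemma qp_norm_LIMSEQ:
  assumes "prime p" "qp_cauchy p X"
  shows "(\<lambda>n. padic_abs p (X n)) \<longlonglongrightarrow> qp_norm p X"
  using qp_cauchy_padic_abs_convergent[OF assms] by (metis limI qp_norm_def)

lemma qp_norm_cases:
  assumes "prime p" "qp_cauchy p X"
  shows "qp_norm p X = 0 \<or> (\<exists>k. qp_norm p X = real p powi k)"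
  using qp_cauchy_padic_abs_convergent[OF assms] by (metis limI qp_norm_def)

lemma qp_norm_nonneg:
  assumes "prime p" "qp_cauchy p X"
  shows "0 \<le> qp_norm p X"
  using qp_norm_LIMSEQ[OF assms] by (rule LIMSEQ_le_const) (simp add: padic_abs_nonneg)

lemma qp_norm_less_one_imp_le:
  assumes p: "prime p" and X: "qp_cauchy p X" and less: "qp_norm p X < 1"
  shows "qp_norm p X \<le> 1 / real p"
  using qp_norm_cases[OF p X]
proof
  assume "\<exists>k. qp_norm p X = real p powi k"
  then obtain k where k: "qp_norm p X = real p powi k" by blast
  have p1: "real p \<ge> 1" using prime_gt_1_nat[OF p] by simp
  have "k \<le> -1"
  proof (rule ccontr)
    assume "\<not> k \<le> -1"
    hence "real p powi 0 \<le> real p powi k" by (intro power_int_increasing p1) simp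
    thus False using less k by simp
  qed
  hence "real p powi k \<le> real p powi (-1)" by (intro power_int_increasing p1)
  thus ?thesis using k by (simp add: power_int_minus divide_inverse)
qed simp

lemma qp_cauchy_add:
  assumes p: "prime p" and X: "qp_cauchy p X" and Y: "qp_cauchy p Y"
  shows "qp_cauchy p (\<lambda>n. X n + Y n)"
  unfolding qp_cauchy_def
proof (intro allI impI)
  fix e :: real assume "e > 0"
  then obtain N1 N2 where
    N1: "\<forall>m\<ge>N1. \<forall>n\<ge>N1. padic_abs p (X m - X n) < e" and
    N2: "\<forall>m\<ge>N2. \<forall>n\<ge>N2. padic_abs p (Y m - Y n) < e"
    using X Y unfolding qp_cauchy_def by meson
  have "padic_abs p ((X m + Y m) - (X n + Y n)) < e" if "m \<ge> max N1 N2" "n \<ge> max N1 N2" for m n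
  proof -
    have "(X m + Y m) - (X n + Y n) = (X m - X n) + (Y m - Y n)" by simp
    hence "padic_abs p ((X m + Y m) - (X n + Y n)) \<le>
        max (padic_abs p (X m - X n)) (padic_abs p (Y m - Y n))"
      using padic_abs_add_le_max[OF p] by metis
    also have "\<dots> < e" using N1 N2 that by simp
    finally show ?thesis .
  qed
  thus "\<exists>N. \<forall>m\<ge>N. \<forall>n\<ge>N. padic_abs p ((X m + Y m) - (X n + Y n)) < e" by blast
qed

lemma qp_cauchy_uminus: "qp_cauchy p X \<Longrightarrow> qp_cauchy p (\<lambda>n. - X n)"
  unfolding qp_cauchy_def by (metis minus_diff_eq minus_diff_minus padic_abs_uminus)

lemma qp_cauchy_diff:
  assumes "prime p" "qp_cauchy p X" "qp_cauchy p Y"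
  shows "qp_cauchy p (\<lambda>n. X n - Y n)"
  using qp_cauchy_add[OF assms(1,2) qp_cauchy_uminus[OF assms(3)]] by simp

lemma qp_norm_uminus [simp]: "qp_norm p (\<lambda>n. - X n) = qp_norm p X"
  unfolding qp_norm_def by simp

lemma qp_norm_minus_commute: "qp_norm p (\<lambda>n. X n - Y n) = qp_norm p (\<lambda>n. Y n - X n)"
  unfolding qp_norm_def by (simp add: padic_abs_minus_commute)

lemma qp_norm_add_le_max:
  assumes p: "prime p" and X: "qp_cauchy p X" and Y: "qp_cauchy p Y"
  shows "qp_norm p (\<lambda>n. X n + Y n) \<le> max (qp_norm p X) (qp_norm p Y)"
proof (rule LIMSEQ_le)
  show "(\<lambda>n. padic_abs p (X n + Y n)) \<longlonglongrightarrow> qp_norm p (\<lambda>n. X n + Y n)"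
    using qp_norm_LIMSEQ[OF p qp_cauchy_add[OF p X Y]] .
  show "(\<lambda>n. max (padic_abs p (X n)) (padic_abs p (Y n))) \<longlonglongrightarrow> max (qp_norm p X) (qp_norm p Y)"
    by (intro tendsto_max qp_norm_LIMSEQ[OF p X] qp_norm_LIMSEQ[OF p Y])
  show "\<exists>N. \<forall>n\<ge>N. padic_abs p (X n + Y n) \<le> max (padic_abs p (X n)) (padic_abs p (Y n))"
    using padic_abs_add_le_max[OF p] by blast
qed

lemma qp_norm_diff_le_max:
  assumes p: "prime p" and X: "qp_cauchy p X" and Y: "qp_cauchy p Y"
  shows "qp_norm p (\<lambda>n. X n - Y n) \<le> max (qp_norm p X) (qp_norm p Y)"
  using qp_norm_add_le_max[OF p X qp_cauchy_uminus[OF Y]] by simp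

lemma qp_norm_le_max_diff:
  assumes p: "prime p" and X: "qp_cauchy p X" and Y: "qp_cauchy p Y"
  shows "qp_norm p X \<le> max (qp_norm p (\<lambda>n. X n - Y n)) (qp_norm p Y)"
  using qp_norm_add_le_max[OF p qp_cauchy_diff[OF p X Y] Y] by simp

lemma qp_norm_eq_if_diff_less:
  assumes p: "prime p" and X: "qp_cauchy p X" and Y: "qp_cauchy p Y"
    and less: "qp_norm p (\<lambda>n. X n - Y n) < qp_norm p Y"
  shows "qp_norm p X = qp_norm p Y"
  using qp_norm_le_max_diff[OF p X Y] qp_norm_le_max_diff[OF p Y X] less
  by (auto simp: qp_norm_minus_commute[of p X Y])

lemma qp_norm_eq_iff_eq_if_diff_less:
  assumes p: "prime p" and X: "qp_cauchy p X" and Y: "qp_cauchy p Y"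
    and less: "qp_norm p (\<lambda>n. X n - Y n) < r"
  shows "qp_norm p X = r \<longleftrightarrow> qp_norm p Y = r"
  using qp_norm_eq_if_diff_less[OF p X Y] qp_norm_eq_if_diff_less[OF p Y X] less
  by (auto simp: qp_norm_minus_commute[of p X Y])

section \<open>Compactly supported continuous functions\<close>

lemma compact_closed_subset: "compact S \<Longrightarrow> closed T \<Longrightarrow> T \<subseteq> S \<Longrightarrow> compact T"
  by (metis compact_Int_closed inf.absorb2)

lemma C00_D:
  assumes "f \<in> C00 p"
  shows C00_qp_cauchy: "qp_cauchy p (f x)"
    and C00_continuous: "e > 0 \<Longrightarrow> \<exists>U. open U \<and> x \<in> U \<and> (\<forall>y\<in>U. qp_norm p (\<lambda>n. f y n - f x n) < e)"
    and C00_compact_support: "\<exists>K. compact K \<and> (\<forall>x. x \<notin> K \<longrightarrow> qp_norm p (f x) = 0)"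
  using assms by (auto simp: C00_def)

lemma C00_bounded:
  assumes p: "prime p" and f: "f \<in> C00 p"
  shows "bdd_above (range (\<lambda>x. qp_norm p (f x)))"
proof -
  note cauchy = C00_qp_cauchy[OF f]
  obtain S where S: "compact S" "\<And>x. x \<notin> S \<Longrightarrow> qp_norm p (f x) = 0"
    using C00_compact_support[OF f] by blast
  define U where "U x = (SOME U. open U \<and> x \<in> U \<and> (\<forall>y\<in>U. qp_norm p (\<lambda>n. f y n - f x n) < 1))"
    for x
  have U: "open (U x) \<and> x \<in> U x \<and> (\<forall>y\<in>U x. qp_norm p (\<lambda>n. f y n - f x n) < 1)" for x
    unfolding U_def by (rule someI_ex) (rule C00_continuous[OF f zero_less_one])
  hence U_open: "open (U x)" for x by blast
  have "S \<subseteq> (\<Union>c\<in>S. U c)" using U by blast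
  with U_open obtain S' where S': "S' \<subseteq> S" "finite S'" "S \<subseteq> (\<Union>c\<in>S'. U c)"
    by (rule compactE_image[OF S(1)])
  define B where "B = Max (insert 1 ((\<lambda>x. qp_norm p (f x)) ` S'))"
  have B1: "1 \<le> B" and B2: "\<And>x. x \<in> S' \<Longrightarrow> qp_norm p (f x) \<le> B"
    unfolding B_def using S'(2) by auto
  have "qp_norm p (f y) \<le> B" for y
  proof (cases "y \<in> S")
    case False thus ?thesis using S(2) B1 by simp
  next
    case True
    then obtain c where c: "c \<in> S'" "y \<in> U c" using S'(3) by blast
    have "qp_norm p (\<lambda>n. f y n - f c n) < 1" using U[of c] c(2) by blast
    hence "max (qp_norm p (\<lambda>n. f y n - f c n)) (qp_norm p (f c)) \<le> B"
      using B1 B2[OF c(1)] by simp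
    thus ?thesis using qp_norm_le_max_diff[OF p cauchy cauchy, of y c] by linarith
  qed
  thus ?thesis by (intro bdd_aboveI2)
qed

lemma qp_norm_le_sup_norm:
  "bdd_above (range (\<lambda>x. qp_norm p (f x))) \<Longrightarrow> qp_norm p (f x) \<le> sup_norm p f"
  unfolding sup_norm_def by (rule cSUP_upper) auto

lemma C00_qp_norm_translate_diff_le:
  assumes p: "prime p" and f: "f \<in> C00 p"
  shows "qp_norm p (\<lambda>n. f (- g + x) n - f x n) \<le> sup_norm p (fun_diff (translate g f) f)"
proof -
  note cauchy = C00_qp_cauchy[OF f]
  obtain B where B: "\<And>x. qp_norm p (f x) \<le> B"
    using C00_bounded[OF p f] by (auto simp: bdd_above_def)
  have "qp_norm p (\<lambda>n. f (- g + y) n - f y n) \<le> B" for y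
    using qp_norm_diff_le_max[OF p cauchy cauchy, of "- g + y" y] B[of "- g + y"] B[of y] by simp
  hence "bdd_above (range (\<lambda>y. qp_norm p (fun_diff (translate g f) f y)))"
    unfolding fun_diff_def translate_def by (intro bdd_aboveI2) simp
  from qp_norm_le_sup_norm[OF this] show ?thesis
    unfolding fun_diff_def translate_def .
qed

lemma closed_C00_level_set:
  assumes p: "prime p" and f: "f \<in> C00 p" and r: "r > 0"
  shows "closed {x. qp_norm p (f x) = r}"
proof -
  note cauchy = C00_qp_cauchy[OF f]
  have "open (- {x. qp_norm p (f x) = r})"
  proof (rule open_subopen[THEN iffD2], intro ballI)
    fix x assume "x \<in> - {x. qp_norm p (f x) = r}"
    hence x: "qp_norm p (f x) \<noteq> r" by simp
    show "\<exists>T. open T \<and> x \<in> T \<and> T \<subseteq> - {x. qp_norm p (f x) = r}"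
    proof (cases "qp_norm p (f x) = 0")
      case True
      obtain U where U: "open U" "x \<in> U" "\<forall>y\<in>U. qp_norm p (\<lambda>n. f y n - f x n) < r"
        using C00_continuous[OF f r] by blast
      have "qp_norm p (f y) < r" if "y \<in> U" for y
      proof -
        have "qp_norm p (f y) \<le> max (qp_norm p (\<lambda>n. f y n - f x n)) 0"
          using qp_norm_le_max_diff[OF p cauchy cauchy, of y x] True by simp
        also have "\<dots> < r" using U(3) that r by simp
        finally show ?thesis .
      qed
      thus ?thesis using U(1,2) by (auto intro!: exI[of _ U])
    next
      case False
      hence pos: "qp_norm p (f x) > 0" using qp_norm_nonneg[OF p cauchy] by (simp add: order_less_le)
      obtain U where U: "open U" "x \<in> U" "\<forall>y\<in>U. qp_norm p (\<lambda>n. f y n - f x n) < qp_norm p (f x)"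
        using C00_continuous[OF f pos] by blast
      have "qp_norm p (f y) \<noteq> r" if "y \<in> U" for y
      proof -
        have "qp_norm p (f y) = qp_norm p (f x)"
          using U(3) that by (intro qp_norm_eq_if_diff_less[OF p cauchy cauchy]) blast
        thus ?thesis using x by simp
      qed
      thus ?thesis using U(1,2) by (auto intro!: exI[of _ U])
    qed
  qed
  thus ?thesis by (simp add: closed_def)
qed

lemma compact_C00_level_set:
  assumes p: "prime p" and f: "f \<in> C00 p" and r: "r > 0"
  shows "compact {x. qp_norm p (f x) = r}"
proof -
  obtain S where "compact S" "\<And>x. x \<notin> S \<Longrightarrow> qp_norm p (f x) = 0"
    using C00_compact_support[OF f] by blast
  moreover have "{x. qp_norm p (f x) = r} \<subseteq> S" using calculation(2) r by force
  ultimately show ?thesis using compact_closed_subset closed_C00_level_set[OF assms] by blast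
qed

lemma C00_sup_norm_one_attained:
  assumes p: "prime p" and f: "f \<in> C00 p" and sup: "sup_norm p f = 1"
  obtains a where "qp_norm p (f a) = 1"
proof (rule ccontr)
  assume "\<not> thesis"
  hence ne: "qp_norm p (f x) \<noteq> 1" for x using that by blast
  have "qp_norm p (f x) \<le> 1" for x
    using qp_norm_le_sup_norm[OF C00_bounded[OF p f]] sup by simp
  hence "qp_norm p (f x) \<le> 1 / real p" for x
    using qp_norm_less_one_imp_le[OF p C00_qp_cauchy[OF f]] ne by (simp add: order_less_le)
  hence "sup_norm p f \<le> 1 / real p" unfolding sup_norm_def by (intro cSUP_least) auto
  moreover have "1 / real p < 1" using prime_gt_1_nat[OF p] by simp
  ultimately show False using sup by simp
qed

definition stabilizer_add :: "'g::group_add set \<Rightarrow> 'g set" where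
  "stabilizer_add A = {g. \<forall>x. g + x \<in> A \<longleftrightarrow> x \<in> A}"

lemma stabilizer_add_iff:
  "g \<in> stabilizer_add A \<longleftrightarrow> (\<forall>x\<in>A. g + x \<in> A) \<and> (\<forall>x\<in>A. - g + x \<in> A)"
proof
  assume "g \<in> stabilizer_add A"
  hence "g + x \<in> A \<longleftrightarrow> x \<in> A" for x by (simp add: stabilizer_add_def)
  hence "x \<in> A \<Longrightarrow> g + x \<in> A" "x \<in> A \<Longrightarrow> - g + x \<in> A" for x
    by (metis add_minus_cancel)+
  thus "(\<forall>x\<in>A. g + x \<in> A) \<and> (\<forall>x\<in>A. - g + x \<in> A)" by blast
next
  assume "(\<forall>x\<in>A. g + x \<in> A) \<and> (\<forall>x\<in>A. - g + x \<in> A)"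
  hence "g + x \<in> A \<longleftrightarrow> x \<in> A" for x by (metis minus_add_cancel)
  thus "g \<in> stabilizer_add A" by (simp add: stabilizer_add_def)
qed

lemma stabilizer_add_uminus [simp]: "- g \<in> stabilizer_add A \<longleftrightarrow> g \<in> stabilizer_add A"
  by (auto simp: stabilizer_add_iff)

lemma subgroup_add_stabilizer_add: "subgroup_add (stabilizer_add A)"
  unfolding subgroup_add_def
proof (intro conjI ballI)
  show "0 \<in> stabilizer_add A" by (simp add: stabilizer_add_def)
next
  fix g h assume "g \<in> stabilizer_add A" "h \<in> stabilizer_add A"
  thus "g + h \<in> stabilizer_add A" by (simp add: stabilizer_add_def add.assoc)
next
  fix g assume "g \<in> stabilizer_add A"
  thus "- g \<in> stabilizer_add A" by simp
qed

lemma subgroup_add_subset_stabilizer_add: "subgroup_add H \<Longrightarrow> H \<subseteq> stabilizer_add H"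
  by (auto simp: subgroup_add_def stabilizer_add_iff)

lemma closed_stabilizer_add:
  fixes A :: "'g::{topological_group_add, t2_space} set"
  assumes "closed A"
  shows "closed (stabilizer_add A)"
proof -
  have "stabilizer_add A = (\<Inter>x\<in>A. (\<lambda>g. g + x) -` A) \<inter> (\<Inter>x\<in>A. (\<lambda>g. - g + x) -` A)"
    by (auto simp: stabilizer_add_iff)
  moreover have "closed ((\<lambda>g. g + x) -` A)" for x
    by (rule continuous_closed_vimage[OF assms]) (intro continuous_intros)
  moreover have "closed ((\<lambda>g. - g + x) -` A)" for x
    by (rule continuous_closed_vimage[OF assms]) (intro continuous_intros)
  ultimately show ?thesis by (simp add: closed_Int closed_INT)
qed

lemma compact_stabilizer_add:
  fixes A :: "'g::{topological_group_add, t2_space} set"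
  assumes A: "compact A" and a: "a \<in> A"
  shows "compact (stabilizer_add A)"
proof (rule compact_closed_subset)
  show "compact ((\<lambda>y. y - a) ` A)"
    by (intro compact_continuous_image A continuous_intros)
  show "closed (stabilizer_add A)" by (intro closed_stabilizer_add compact_imp_closed A)
  show "stabilizer_add A \<subseteq> (\<lambda>y. y - a) ` A"
  proof
    fix g assume "g \<in> stabilizer_add A"
    hence "g + a \<in> A" using a by (simp add: stabilizer_add_def)
    thus "g \<in> (\<lambda>y. y - a) ` A" by (intro image_eqI[of _ _ "g + a"]) simp_all
  qed
qed

lemma reiter_one_imp_locally_elliptic:
  assumes p: "prime p" and R: "reiter p 1 TYPE('g::{topological_group_add, t2_space})"
  shows "locally_elliptic TYPE('g)"
  unfolding locally_elliptic_def
proof (intro allI impI)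
  fix F :: "'g set" assume "finite F"
  hence "compact F" by (rule finite_imp_compact)
  then obtain f where f: "f \<in> C00 p" "sup_norm p f = 1"
    and close: "\<And>g. g \<in> F \<Longrightarrow> sup_norm p (fun_diff (translate g f) f) < 1"
    using R unfolding reiter_def by auto
  note cauchy = C00_qp_cauchy[OF f(1)]
  define A where "A = {x. qp_norm p (f x) = 1}"
  obtain a where "a \<in> A" using C00_sup_norm_one_attained[OF p f] by (auto simp: A_def)
  moreover have "compact A"
    unfolding A_def by (rule compact_C00_level_set[OF p f(1) zero_less_one])
  ultimately have "compact (stabilizer_add A)" by (intro compact_stabilizer_add)
  moreover have "F \<subseteq> stabilizer_add A"
  proof
    fix g assume "g \<in> F"
    have "qp_norm p (\<lambda>n. f (- g + x) n - f x n) < 1" for x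
      using C00_qp_norm_translate_diff_le[OF p f(1)] close[OF \<open>g \<in> F\<close>] by (rule le_less_trans)
    hence "- g + x \<in> A \<longleftrightarrow> x \<in> A" for x
      unfolding A_def mem_Collect_eq by (rule qp_norm_eq_iff_eq_if_diff_less[OF p cauchy cauchy])
    hence "- g \<in> stabilizer_add A" by (simp add: stabilizer_add_def)
    thus "g \<in> stabilizer_add A" by simp
  qed
  ultimately show "\<exists>H. subgroup_add H \<and> compact H \<and> F \<subseteq> H"
    using subgroup_add_stabilizer_add by blast
qed

section \<open>Compact open subgroups\<close>

lemma open_subgroup_addI:
  fixes H B :: "'g::{topological_group_add, t2_space} set"
  assumes H: "subgroup_add H" and B: "open B" "0 \<in> B" "B \<subseteq> H"
  shows "open H"
proof (rule open_subopen[THEN iffD2], intro ballI)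
  fix h assume h: "h \<in> H"
  let ?T = "(\<lambda>y. - h + y) -` B"
  have "open ?T" by (rule continuous_open_vimage[OF B(1)]) (intro continuous_intros)
  moreover have "h \<in> ?T" using B(2) by simp
  moreover have "?T \<subseteq> H"
  proof
    fix y assume "y \<in> ?T"
    hence "h + (- h + y) \<in> H" using H h B(3) unfolding subgroup_add_def by blast
    thus "y \<in> H" by simp
  qed
  ultimately show "\<exists>T. open T \<and> h \<in> T \<and> T \<subseteq> H" by blast
qed

text \<open>In a locally compact Hausdorff space a compact component has a neighbourhood basis
  of clopen sets; here the components are points.\<close>

lemma totally_disconnected_compact_open_nbhd:
  fixes x :: "'a::t2_space"
  assumes td: "totally_disconnected TYPE('a)"
    and lc: "locally_compact_space (euclidean :: 'a topology)"
  obtains V where "compact V" "open V" "x \<in> V"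
proof -
  obtain U K where UK: "openin euclidean U" "compactin euclidean K" "x \<in> U" "U \<subseteq> K"
    using lc unfolding locally_compact_space_def by (metis UNIV_I topspace_euclidean)
  have "connected_component_of euclidean x = connected_component UNIV x"
    by (auto simp: connected_component_of_def connected_component_def fun_eq_iff)
  hence "connected_component_of_set euclidean x = {x}"
    using td unfolding totally_disconnected_def by simp
  hence "{x} \<in> connected_components_of euclidean"
    unfolding connected_components_of_def topspace_euclidean by (rule image_eqI[OF sym UNIV_I])
  moreover have "Hausdorff_space (euclidean :: 'a topology)"
    unfolding Hausdorff_space_def by (metis disjnt_def hausdorff open_openin)
  moreover have "compactin euclidean {x}" by simp
  ultimately obtain V V' where
    V: "openin euclidean V" "openin euclidean V'" "disjnt V V'" "V \<union> V' = topspace euclidean"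
       "{x} \<subseteq> V" "V \<subseteq> U"
    using wilder_locally_compact_component_thm[OF lc _ _ _ UK(1)] UK(3) by blast
  have "- V = V'" using V(3,4) by (auto simp: disjnt_def)
  hence "closed V" using V(2) by (metis closed_def open_openin)
  moreover have "compact K" using UK(2) by simp
  moreover have "V \<subseteq> K" using UK(4) V(6) by blast
  ultimately have "compact V" by (metis compact_closed_subset)
  moreover have "open V" using V(1) by simp
  moreover have "x \<in> V" using V(5) by blast
  ultimately show thesis by (rule that)
qed

lemma van_dantzig:
  assumes td: "totally_disconnected TYPE('g)"
    and lc: "locally_compact_space (euclidean :: 'g topology)"
  obtains W :: "'g::{topological_group_add, t2_space} set" where "subgroup_add W" "open W" "compact W"
proof -
  obtain V :: "'g set" where V: "compact V" "open V" "0 \<in> V"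
    using totally_disconnected_compact_open_nbhd[OF td lc] by blast
  have "open ((\<lambda>z :: 'g \<times> 'g. fst z + snd z) -` V)"
    by (rule continuous_open_vimage[OF V(2)]) (intro continuous_intros)
  moreover have "{0} \<times> V \<subseteq> (\<lambda>z. fst z + snd z) -` V" by auto
  ultimately obtain X where X: "0 \<in> X" "open X" "X \<times> V \<subseteq> (\<lambda>z. fst z + snd z) -` V"
    using Elementary_Topology.tube_lemma[OF V(1)] by blast
  hence X_V: "b + v \<in> V" if "b \<in> X" "v \<in> V" for b v
    using that by auto
  define B where "B = X \<inter> uminus -` X"
  have "open (uminus -` X)" by (rule continuous_open_vimage[OF X(2)]) (intro continuous_intros)
  with X(2) have "open B" unfolding B_def by (rule open_Int)
  moreover have "0 \<in> B" using X(1) by (simp add: B_def)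
  moreover have "B \<subseteq> stabilizer_add V" using X_V by (auto simp: B_def stabilizer_add_iff)
  ultimately have "open (stabilizer_add V)"
    by (rule open_subgroup_addI[OF subgroup_add_stabilizer_add])
  thus thesis using that subgroup_add_stabilizer_add compact_stabilizer_add[OF V(1,3)] by blast
qed

lemma compact_finite_translate_cover:
  fixes K U :: "'g::{topological_group_add, t2_space} set"
  assumes K: "compact K" and U: "open U" "0 \<in> U"
  obtains F where "finite F" "K \<subseteq> (\<Union>k\<in>F. (\<lambda>y. y - k) -` U)"
proof -
  have "open ((\<lambda>y. y - k) -` U)" for k
    by (rule continuous_open_vimage[OF U(1)]) (intro continuous_intros)
  moreover have "K \<subseteq> (\<Union>k\<in>K. (\<lambda>y. y - k) -` U)"
  proof
    fix x assume "x \<in> K"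
    thus "x \<in> (\<Union>k\<in>K. (\<lambda>y. y - k) -` U)" using U(2) by (intro UN_I[of x]) simp_all
  qed
  ultimately obtain F where "F \<subseteq> K" "finite F" "K \<subseteq> (\<Union>k\<in>F. (\<lambda>y. y - k) -` U)"
    by (rule compactE_image[OF K])
  thus thesis using that by blast
qed

lemma compact_sums_monoid_add:
  fixes A B :: "'a::topological_monoid_add set"
  assumes "compact A" "compact B"
  shows "compact {a + b | a b. a \<in> A \<and> b \<in> B}"
proof -
  have "{a + b | a b. a \<in> A \<and> b \<in> B} = (\<lambda>z. fst z + snd z) ` (A \<times> B)" by force
  thus ?thesis
    by (simp only:) (intro compact_continuous_image compact_Times assms continuous_intros)
qed

lemma subset_stabilizer_add_sums:
  fixes W H S :: "'g::group_add set"
  assumes W: "subgroup_add W" and H: "subgroup_add H" and S: "\<And>s. s \<in> S \<Longrightarrow> - s \<in> S"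
    and SW: "{s + w | s w. s \<in> S \<and> w \<in> W} \<subseteq> {w + h | w h. w \<in> W \<and> h \<in> H}"
  shows "W \<union> S \<subseteq> stabilizer_add {w + h | w h. w \<in> W \<and> h \<in> H}"
    (is "_ \<subseteq> stabilizer_add ?M")
proof -
  have Wadd: "\<And>x y. x \<in> W \<Longrightarrow> y \<in> W \<Longrightarrow> x + y \<in> W" and Wneg: "\<And>x. x \<in> W \<Longrightarrow> - x \<in> W"
    using W by (auto simp: subgroup_add_def)
  have H0: "0 \<in> H" and Hadd: "\<And>x y. x \<in> H \<Longrightarrow> y \<in> H \<Longrightarrow> x + y \<in> H"
    using H by (auto simp: subgroup_add_def)
  have "g + m \<in> ?M" if g: "g \<in> W \<union> S" and m: "m \<in> ?M" for g m
  proof -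
    obtain w h where wh: "w \<in> W" "h \<in> H" "m = w + h" using m by blast
    have "g + w \<in> ?M"
    proof (cases "g \<in> W")
      case True
      hence "g + w = (g + w) + 0" "g + w \<in> W" using Wadd wh(1) by simp_all
      thus ?thesis using H0 by blast
    next
      case False
      hence "g + w \<in> {s + w | s w. s \<in> S \<and> w \<in> W}" using g wh(1) by blast
      thus ?thesis using SW by blast
    qed
    then obtain w' h' where w'h': "w' \<in> W" "h' \<in> H" "g + w = w' + h'" by blast
    hence "g + m = w' + (h' + h)" by (simp only: wh(3) add.assoc[symmetric])
    thus ?thesis using Hadd w'h'(1,2) wh(2) by blast
  qed
  moreover have "- g \<in> W \<union> S" if "g \<in> W \<union> S" for g
    using that Wneg S by blast
  ultimately show ?thesis by (auto simp: stabilizer_add_iff)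
qed

text \<open>Cover \<open>K\<close> by finitely many cosets \<open>W + k\<close>, \<open>k \<in> F\<close>, and the compact set \<open>\<plusminus>F + W\<close> by
  finitely many cosets \<open>W + t\<close>. If the compact subgroup \<open>H\<close> contains all these \<open>t\<close>, then
  \<open>\<plusminus>F + W \<subseteq> W + H\<close>, so \<open>W\<close> and \<open>F\<close> lie in the stabilizer of the compact set \<open>W + H\<close>.\<close>

lemma locally_elliptic_compact_subset_open_subgroup:
  fixes K W :: "'g::{topological_group_add, t2_space} set"
  assumes le: "locally_elliptic TYPE('g)"
    and W: "subgroup_add W" "open W" "compact W" and K: "compact K"
  obtains R where "subgroup_add R" "open R" "compact R" "K \<subseteq> R"
proof -
  have W0: "0 \<in> W" using W(1) by (simp add: subgroup_add_def)
  obtain F where F: "finite F" "K \<subseteq> (\<Union>k\<in>F. (\<lambda>y. y - k) -` W)"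
    using compact_finite_translate_cover[OF K W(2) W0] .
  define S where "S = F \<union> uminus ` F"
  have "compact S" using F(1) by (simp add: S_def finite_imp_compact)
  hence "compact {s + w | s w. s \<in> S \<and> w \<in> W}" using W(3) by (rule compact_sums_monoid_add)
  then obtain T where T: "finite T" "{s + w | s w. s \<in> S \<and> w \<in> W} \<subseteq> (\<Union>t\<in>T. (\<lambda>y. y - t) -` W)"
    using compact_finite_translate_cover[OF _ W(2) W0] by blast
  obtain H where H: "subgroup_add H" "compact H" "T \<subseteq> H"
    using le T(1) unfolding locally_elliptic_def by blast
  define M where "M = {w + h | w h. w \<in> W \<and> h \<in> H}"
  have "{s + w | s w. s \<in> S \<and> w \<in> W} \<subseteq> M"
  proof
    fix c assume "c \<in> {s + w | s w. s \<in> S \<and> w \<in> W}"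
    then obtain t where "t \<in> T" "c - t \<in> W" using T(2) by blast
    moreover have "c = (c - t) + t" by simp
    ultimately show "c \<in> M" unfolding M_def using H(3) by blast
  qed
  hence WS: "W \<union> S \<subseteq> stabilizer_add M"
    unfolding M_def using W(1) H(1) by (intro subset_stabilizer_add_sums) (auto simp: S_def)
  have "K \<subseteq> stabilizer_add M"
  proof
    fix x assume "x \<in> K"
    then obtain k where "k \<in> F" "x - k \<in> W" using F(2) by blast
    hence "x - k \<in> stabilizer_add M" "k \<in> stabilizer_add M" using WS by (auto simp: S_def)
    hence "(x - k) + k \<in> stabilizer_add M"
      using subgroup_add_stabilizer_add unfolding subgroup_add_def by blast
    thus "x \<in> stabilizer_add M" by simp
  qed
  moreover have "open (stabilizer_add M)"
    using WS by (intro open_subgroup_addI[OF subgroup_add_stabilizer_add W(2) W0]) blast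
  moreover have "compact (stabilizer_add M)"
    unfolding M_def using W0 H(1)
    by (intro compact_stabilizer_add[of _ 0] compact_sums_monoid_add W(3) H(2))
       (force simp: subgroup_add_def)
  ultimately show thesis using that subgroup_add_stabilizer_add by blast
qed

definition qp_indicator :: "'a set \<Rightarrow> 'a \<Rightarrow> nat \<Rightarrow> rat" where
  "qp_indicator A x = (\<lambda>n. if x \<in> A then 1 else 0)"

lemma qp_norm_qp_indicator [simp]: "qp_norm p (qp_indicator A x) = (if x \<in> A then 1 else 0)"
  by (simp add: qp_indicator_def)

lemma qp_indicator_in_C00:
  assumes "open A" "closed A" "compact A"
  shows "qp_indicator A \<in> C00 p"
  unfolding C00_def mem_Collect_eq
proof (intro conjI allI impI)
  fix x show "qp_cauchy p (qp_indicator A x)" by (simp add: qp_indicator_def)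
next
  fix x :: 'a and e :: real assume "e > 0"
  define U where "U = (if x \<in> A then A else - A)"
  show "\<exists>U. open U \<and> x \<in> U \<and> (\<forall>y\<in>U. qp_norm p (\<lambda>n. qp_indicator A y n - qp_indicator A x n) < e)"
  proof (intro exI conjI ballI)
    show "open U" "x \<in> U" using assms(1,2) by (auto simp: U_def open_Compl)
    fix y assume "y \<in> U"
    hence "qp_indicator A y = qp_indicator A x" by (auto simp: U_def qp_indicator_def split: if_splits)
    thus "qp_norm p (\<lambda>n. qp_indicator A y n - qp_indicator A x n) < e" using \<open>e > 0\<close> by simp
  qed
next
  show "\<exists>K. compact K \<and> (\<forall>x. x \<notin> K \<longrightarrow> qp_norm p (qp_indicator A x) = 0)"
    using assms(3) by auto
qed

lemma sup_norm_qp_indicator: "A \<noteq> {} \<Longrightarrow> sup_norm p (qp_indicator A) = 1"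
  unfolding sup_norm_def by (rule cSup_eq_maximum) auto

lemma translate_qp_indicator:
  assumes "g \<in> stabilizer_add A"
  shows "translate g (qp_indicator A) = qp_indicator A"
proof -
  have "- g \<in> stabilizer_add A" using assms by simp
  hence "- g + x \<in> A \<longleftrightarrow> x \<in> A" for x by (simp add: stabilizer_add_def)
  thus ?thesis by (simp add: translate_def qp_indicator_def fun_eq_iff)
qed

lemma sup_norm_fun_diff_self [simp]: "sup_norm p (fun_diff f f) = 0"
  by (simp add: sup_norm_def fun_diff_def)

lemma locally_elliptic_imp_reiter_zero:
  assumes td: "totally_disconnected TYPE('g::{topological_group_add, t2_space})"
    and lc: "locally_compact_space (euclidean :: 'g topology)"
    and le: "locally_elliptic TYPE('g)"
  shows "reiter p 0 TYPE('g)"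
  unfolding reiter_def if_True simp_thms(6)
proof (intro allI impI)
  fix K :: "'g set" assume K: "compact K"
  obtain W :: "'g set" where "subgroup_add W" "open W" "compact W" using van_dantzig[OF td lc] .
  then obtain R where R: "subgroup_add R" "open R" "compact R" "K \<subseteq> R"
    using locally_elliptic_compact_subset_open_subgroup[OF le _ _ _ K] by blast
  have "qp_indicator R \<in> C00 p"
    using R(2,3) by (intro qp_indicator_in_C00 compact_imp_closed)
  moreover have "sup_norm p (qp_indicator R) = 1"
    using R(1) by (intro sup_norm_qp_indicator) (auto simp: subgroup_add_def)
  moreover have "sup_norm p (fun_diff (translate g (qp_indicator R)) (qp_indicator R)) = 0"
    if "g \<in> K" for g
  proof -
    have "g \<in> stabilizer_add R" using that R(4) subgroup_add_subset_stabilizer_add[OF R(1)] by blast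
    thus ?thesis by (simp add: translate_qp_indicator)
  qed
  ultimately show "\<exists>f\<in>C00 p. sup_norm p f = 1 \<and> (\<forall>g\<in>K. sup_norm p (fun_diff (translate g f) f) = 0)"
    by blast
qed

lemma reiter_mono:
  assumes R: "reiter p \<epsilon> TYPE('g::topological_group_add)" and "\<epsilon> \<le> \<delta>" "0 < \<delta>"
  shows "reiter p \<delta> TYPE('g)"
proof -
  have "\<exists>f\<in>C00 p. sup_norm p f = 1 \<and> (\<forall>g\<in>K. sup_norm p (fun_diff (translate g f) f) < \<delta>)"
    if K: "compact K" for K :: "'g set"
  proof (cases "\<epsilon> = 0")
    case True
    then obtain f where "f \<in> C00 p" "sup_norm p f = 1"
      "\<forall>g\<in>K. sup_norm p (fun_diff (translate g f) f) = 0"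
      using R K unfolding reiter_def by auto
    thus ?thesis using \<open>0 < \<delta>\<close> by auto
  next
    case False
    then obtain f where "f \<in> C00 p" "sup_norm p f = 1"
      "\<forall>g\<in>K. sup_norm p (fun_diff (translate g f) f) < \<epsilon>"
      using R K unfolding reiter_def by auto
    thus ?thesis using \<open>\<epsilon> \<le> \<delta>\<close> by (auto intro: less_le_trans)
  qed
  thus ?thesis using \<open>0 < \<delta>\<close> unfolding reiter_def by simp
qed

theorem theorem4p7:
  fixes p :: nat
  assumes "prime p"
    and "totally_disconnected TYPE('g::{topological_group_add, t2_space})"
    and "locally_compact_space (euclidean :: 'g topology)"
  shows "(locally_elliptic TYPE('g) \<longleftrightarrow> reiter p 0 TYPE('g))
       \<and> (reiter p 0 TYPE('g) \<longleftrightarrow> (\<exists>\<epsilon>\<in>{0..1}. reiter p \<epsilon> TYPE('g)))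
       \<and> ((\<exists>\<epsilon>\<in>{0..1}. reiter p \<epsilon> TYPE('g)) \<longleftrightarrow> reiter p 1 TYPE('g))"
proof -
  have "locally_elliptic TYPE('g) \<Longrightarrow> reiter p 0 TYPE('g)"
    using locally_elliptic_imp_reiter_zero[OF assms(2,3)] .
  moreover have "reiter p \<epsilon> TYPE('g) \<Longrightarrow> \<epsilon> \<in> {0..1} \<Longrightarrow> reiter p 1 TYPE('g)" for \<epsilon>
    by (auto intro: reiter_mono)
  moreover have "reiter p 1 TYPE('g) \<Longrightarrow> locally_elliptic TYPE('g)"
    using reiter_one_imp_locally_elliptic[OF assms(1)] .
  moreover have "reiter p 0 TYPE('g) \<Longrightarrow> \<exists>\<epsilon>\<in>{0..1}. reiter p \<epsilon> TYPE('g)"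
    by force
  ultimately show ?thesis by blast
qed

end
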